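(* Let $\Sigma:\ \dot x=-ZB\mathcal{K}(x^* )B^T\mathrm{Exp}\big(Z^T\mathrm{Ln}(\tfrac{x}{x^*})\big)$ be a balanced mass action chemical reaction network with thermodynamic equilibrium $x^*\in\mathbb{R}^m_+$, and let $\hat\Sigma:\ \dot x=-\hat Z\hat B\hat{\mathcal{K}}(x^* )\hat B^T\mathrm{Exp}\big(\hat Z^T\mathrm{Ln}(\tfrac{x}{x^*})\big)$ be its reduced-order model obtained by deleting a subset $\mathcal{V}_r$ of complexes (as described in the context). Denote by $\mathcal{E}$ and $\hat{\mathcal{E}}$ the sets of equilibria (points $x\in\mathbb{R}^m_+$ where the right-hand side vanishes) of $\Sigma$ and $\hat\Sigma$, respectively. Then $\mathcal{E}\subset\hat{\mathcal{E}}$. Furthermore, if $\Sigma$ has deficiency zero then so does $\hat\Sigma$.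
   Context: Network $\Sigma$: $m$ species with concentrations $x\in\mathbb{R}^m_+$, $c$ complexes, $r$ reactions. $Z$ ($m\times c$) has as $\rho$-th column the species composition of complex $\rho$. The complex graph has the complexes as vertices and for each reaction $j$ an edge from its substrate complex $\mathcal{S}_j$ to its product complex $\mathcal{P}_j$; $B$ is its $c\times r$ incidence matrix ($-1$ at tail, $+1$ at head). Mass action rates $v_j(x)=k_j^{\mathrm{forw}}\exp(Z_{\mathcal{S}_j}^T\mathrm{Ln}(x))-k_j^{\mathrm{rev}}\exp(Z_{\mathcal{P}_j}^T\mathrm{Ln}(x))$; $x^*$ with $v(x^* )=0$ is a thermodynamic equilibrium; balanced reaction constants $\kappa_j(x^* )=k_j^{\mathrm{forw}}\exp(Z_{\mathcal{S}_j}^T\mathrm{Ln}(x^* ))>0$, $\mathcal{K}(x^* )=\mathrm{diag}(\kappa_j(x^* ))$, so that $ZBv(x)=-ZB\mathcal{K}(x^* )B^T\mathrm{Exp}(Z^T\mathrm{Ln}(x/x^* ))$. Reduction: let $L:=B\mathcal{K}(x^* )B^T$ (a symmetric weighted Laplacian of the complex graph). Choose a subset $\mathcal{V}_r$ of complexes to delete and, after permuting the complexes so that $\mathcal{V}_r$ comes last, partition $L=\begin{bmatrix}L_{11}&L_{12}\\L_{21}&L_{22}\end{bmatrix}$ and $Z=\begin{bmatrix}Z_1&Z_2\end{bmatrix}$ accordingly, with $L_{22}$ invertible. The Schur complement $\hat L:=L_{11}-L_{12}L_{22}^{-1}L_{21}$ is the weighted Laplacian $\hat B\hat{\mathcal{K}}(x^*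 )\hat B^T$ of a directed graph on the remaining complexes, with incidence matrix $\hat B$ and positive diagonal weight matrix $\hat{\mathcal{K}}(x^* )$; set $\hat Z:=Z_1$. The deficiency of a network with complex stoichiometric matrix $Z$ and incidence matrix $B$ is $\operatorname{rank}B-\operatorname{rank}ZB$; deficiency zero means this equals $0$ (equivalently $\ker Z\cap\operatorname{im}B=0$). $\mathrm{Ln},\mathrm{Exp}$ are componentwise logarithm/exponential, $x/x^*$ the componentwise quotient. *)

theory Defs
  imports "Jordan_Normal_Form.DL_Rank" "Jordan_Normal_Form.DL_Submatrix"
begin

definition incidence_mat :: "nat \<Rightarrow> nat \<Rightarrow> (nat \<Rightarrow> nat) \<Rightarrow> (nat \<Rightarrow> nat) \<Rightarrow> real mat" where
  "incidence_mat c r S P = mat c r (\<lambda>(i,j). (if i = P j then 1 else 0) - (if i = S j then 1 else 0))"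

definition Ln_vec :: "real vec \<Rightarrow> real vec" where
  "Ln_vec x = map_vec ln x"

definition Exp_vec :: "real vec \<Rightarrow> real vec" where
  "Exp_vec x = map_vec exp x"

definition vec_quot :: "real vec \<Rightarrow> real vec \<Rightarrow> real vec" where
  "vec_quot x y = vec (dim_vec x) (\<lambda>i. x $ i / y $ i)"

definition pos_vec :: "nat \<Rightarrow> real vec \<Rightarrow> bool" where
  "pos_vec n x \<longleftrightarrow> dim_vec x = n \<and> (\<forall>i<n. x $ i > 0)"

text \<open>mass action rate of reaction j (substrate complex S j, product complex P j)\<close>
definition mass_action_rate ::
  "real mat \<Rightarrow> (nat \<Rightarrow> nat) \<Rightarrow> (nat \<Rightarrow> nat) \<Rightarrow> (nat \<Rightarrow> real) \<Rightarrow> (nat \<Rightarrow> real) \<Rightarrow> real vec \<Rightarrow> nat \<Rightarrow> real" where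
  "mass_action_rate Z S P kf kr x j =
     kf j * exp (col Z (S j) \<bullet> Ln_vec x) - kr j * exp (col Z (P j) \<bullet> Ln_vec x)"

definition balanced_rhs :: "real mat \<Rightarrow> real mat \<Rightarrow> (nat \<Rightarrow> real) \<Rightarrow> real vec \<Rightarrow> real vec \<Rightarrow> real vec" where
  "balanced_rhs Z B \<kappa> xs x =
     - (Z * B * mat_diag (dim_col B) \<kappa> * transpose_mat B) *\<^sub>v Exp_vec (transpose_mat Z *\<^sub>v Ln_vec (vec_quot x xs))"

definition equilibria :: "nat \<Rightarrow> real mat \<Rightarrow> real mat \<Rightarrow> (nat \<Rightarrow> real) \<Rightarrow> real vec \<Rightarrow> real vec set" where
  "equilibria m Z B \<kappa> xs = {x. pos_vec m x \<and> balanced_rhs Z B \<kappa> xs x = 0\<^sub>v m}"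

definition mat_rank :: "real mat \<Rightarrow> nat" where
  "mat_rank A = vec_space.rank (dim_row A) A"

definition deficiency :: "real mat \<Rightarrow> real mat \<Rightarrow> int" where
  "deficiency Z B = int (mat_rank B) - int (mat_rank (Z * B))"

end

theory Submission
  imports Defs
begin

text \<open>
  Write L = B K B^T. If x is an equilibrium of the full network, put u = Z^T Ln(x/x*) and
  y = Exp u. From Z L y = 0 we get 0 = <u, L y> = sum_j kappa_j (u_Pj - u_Sj) (e^u_Pj - e^u_Sj),
  a sum of non-negative terms, so L y = 0. A vector whose image under L vanishes on the deleted
  complexes is mapped by the Schur complement L11 - L12 L22^-1 L21 to the remaining part of its
  image; hence the restriction of y, which is the exponential term of the reduced model since
  Z1^T restricts Z^T, is annihilated by the reduced Laplacian.

  Deficiency zero means that Z is injective on im B = im L (the rank of B K B^T equals that of B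
  for positive K). Every vector w on the remaining complexes extends to a y such that L y vanishes
  on the deleted ones, so each vector of the image of the reduced Laplacian is the remaining part
  of a vector of im L supported on the remaining complexes, on which Z acts as Z1. Hence Z1 is
  injective on the image of the reduced Laplacian, which is the image of the reduced incidence
  matrix.
\<close>

section \<open>Rank and injectivity on column spaces\<close>

lemma (in vectorspace) fin_dim_subspace:
  assumes "fin_dim" and X: "VectorSpace.subspace K X V"
  shows "vectorspace.fin_dim K (vs X)"
proof -
  interpret X: vectorspace K "vs X" using X by (rule subspace_is_vs)
  have X_carrier: "X \<subseteq> carrier V"
    using X unfolding VectorSpace.subspace_def submodule_def by auto
  have indpt_small: "finite A \<and> card A \<le> dim"
    if A: "A \<subseteq> carrier (vs X) \<and> X.lin_indpt A" for A
  proof -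
    have "lin_indpt A" using span_li_not_depend(2)[of A X] A X X_carrier by auto
    then show ?thesis using li_le_dim[OF \<open>fin_dim\<close>] A X_carrier by auto
  qed
  have "\<exists>A. finite A \<and> maximal A (\<lambda>S. S \<subseteq> carrier (vs X) \<and> X.lin_indpt S)"
    by (rule maximal_exists[where N = dim and B = "{}"]) (use indpt_small in blast, auto simp: X.lin_dep_def)
  then obtain A where "finite A" and A: "maximal A (\<lambda>S. S \<subseteq> carrier (vs X) \<and> X.lin_indpt S)"
    by blast
  then have "X.basis A" by (intro X.max_li_is_basis) auto
  then show ?thesis using \<open>finite A\<close> unfolding X.fin_dim_def X.basis_def by auto
qed

lemma (in vectorspace) dim_0_imp_trivial:
  assumes "fin_dim" and "dim = 0"
  shows "carrier V = {\<zero>\<^bsub>V\<^esub>}"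
proof -
  obtain b where b: "basis b" using finite_basis_exists[OF \<open>fin_dim\<close>] by blast
  then have "finite b" using \<open>fin_dim\<close> basis_def li_le_dim(1) by blast
  then have "b = {}" using dim_basis b \<open>dim = 0\<close> by auto
  then show ?thesis using b unfolding basis_def using span_empty by auto
qed

lemma (in linear_map) dim_image_eq_iff_inj:
  assumes fd: "V.fin_dim"
  shows "vectorspace.dim K (W.vs imT) = V.dim \<longleftrightarrow> inj_on T (carrier V)"
proof -
  interpret Ker: vectorspace K "V.vs kerT" by (rule V.subspace_is_vs[OF kerT_is_subspace])
  have rank_nullity: "vectorspace.dim K (W.vs imT) + Ker.dim = V.dim"
    by (rule rank_nullity[OF fd])
  have "Ker.dim = 0 \<longleftrightarrow> inj_on T (carrier V)"
  proof
    assume "Ker.dim = 0"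
    have "Ker.fin_dim" by (rule V.fin_dim_subspace[OF fd kerT_is_subspace])
    then have "carrier (V.vs kerT) = {\<zero>\<^bsub>V.vs kerT\<^esub>}" by (rule Ker.dim_0_imp_trivial) fact
    then show "inj_on T (carrier V)" by (intro Ke0_imp_inj) simp
  qed (rule inj_imp_dim_ker0)
  then show ?thesis using rank_nullity by linarith
qed

lemma (in linear_map) dim_image_le:
  assumes "V.fin_dim"
  shows "vectorspace.dim K (W.vs imT) \<le> V.dim"
  using rank_nullity[OF assms] by linarith

definition mat_range :: "'a :: semiring_0 mat \<Rightarrow> 'a vec set" where
  "mat_range A = (\<lambda>x. A *\<^sub>v x) ` carrier_vec (dim_col A)"

lemma mat_rangeI: "x \<in> carrier_vec (dim_col A) \<Longrightarrow> A *\<^sub>v x \<in> mat_range A"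
  unfolding mat_range_def by blast

lemma mat_rangeE:
  assumes "v \<in> mat_range A" and "A \<in> carrier_mat n k"
  obtains x where "x \<in> carrier_vec k" "v = A *\<^sub>v x"
  using assms unfolding mat_range_def by blast

lemma mat_range_carrier: "A \<in> carrier_mat n k \<Longrightarrow> mat_range A \<subseteq> carrier_vec n"
  unfolding mat_range_def by auto

lemma (in vec_space) span_cols_eq_mat_range:
  assumes "A \<in> carrier_mat n k"
  shows "span (set (cols A)) = mat_range A"
  using col_space_eq[OF assms] assms unfolding col_space_def mat_range_def by auto

lemma (in vec_space) mat_range_subspace:
  assumes "A \<in> carrier_mat n k"
  shows "VectorSpace.subspace class_ring (mat_range A) V"
  unfolding span_cols_eq_mat_range[OF assms, symmetric]
  using assms cols_dim carrier_matD(1) by (intro span_is_subspace) blast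

lemma (in vec_space) mat_range_fin_dim:
  assumes "A \<in> carrier_mat n k"
  shows "vectorspace.fin_dim class_ring (vs (mat_range A))"
  using fin_dim_span_cols[OF assms] unfolding span_cols_eq_mat_range[OF assms] .

lemma (in vec_space) rank_eq_dim_mat_range:
  assumes "A \<in> carrier_mat n k"
  shows "rank A = vectorspace.dim class_ring (vs (mat_range A))"
  unfolding rank_def span_cols_eq_mat_range[OF assms] ..

lemma mat_range_mult:
  assumes "A \<in> carrier_mat n k" and "M \<in> carrier_mat p n"
  shows "mat_range (M * A) = (\<lambda>v. M *\<^sub>v v) ` mat_range A"
proof -
  have "(M * A) *\<^sub>v x = M *\<^sub>v (A *\<^sub>v x)" if "x \<in> carrier_vec k" for x
    using assms that by (simp add: assoc_mult_mat_vec)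
  then show ?thesis
    using assms unfolding mat_range_def image_image by (intro image_cong) auto
qed

lemma mat_range_mult_subset:
  assumes "A \<in> carrier_mat n k" and "M \<in> carrier_mat k l"
  shows "mat_range (A * M) \<subseteq> mat_range A"
proof
  fix v assume "v \<in> mat_range (A * M)"
  then obtain x where x: "x \<in> carrier_vec l" and "v = (A * M) *\<^sub>v x"
    using assms by (elim mat_rangeE) auto
  then have "v = A *\<^sub>v (M *\<^sub>v x)" using assms by simp
  then show "v \<in> mat_range A"
    using assms x mat_rangeI[of "M *\<^sub>v x" A] by simp
qed

lemma mult_mat_zero_vec: "A \<in> carrier_mat n k \<Longrightarrow> A *\<^sub>v 0\<^sub>v k = 0\<^sub>v n"
  by (intro eq_vecI) auto

lemma inj_on_mat_range_iff:
  fixes A M :: "'a :: comm_ring_1 mat"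
  assumes A: "A \<in> carrier_mat n k" and M: "M \<in> carrier_mat p n"
  shows "inj_on (\<lambda>v. M *\<^sub>v v) (mat_range A) \<longleftrightarrow> (\<forall>v\<in>mat_range A. M *\<^sub>v v = 0\<^sub>v p \<longrightarrow> v = 0\<^sub>v n)"
proof
  assume "inj_on (\<lambda>v. M *\<^sub>v v) (mat_range A)"
  moreover have "0\<^sub>v n \<in> mat_range A" and "M *\<^sub>v 0\<^sub>v n = 0\<^sub>v p"
    using mat_rangeI[of "0\<^sub>v k" A] A M by (auto simp: mult_mat_zero_vec)
  ultimately show "\<forall>v\<in>mat_range A. M *\<^sub>v v = 0\<^sub>v p \<longrightarrow> v = 0\<^sub>v n"
    by (metis inj_onD)
next
  assume ker: "\<forall>v\<in>mat_range A. M *\<^sub>v v = 0\<^sub>v p \<longrightarrow> v = 0\<^sub>v n"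
  show "inj_on (\<lambda>v. M *\<^sub>v v) (mat_range A)"
  proof (rule inj_onI)
    fix v w assume "v \<in> mat_range A" "w \<in> mat_range A" and eq: "M *\<^sub>v v = M *\<^sub>v w"
    then obtain x y where x: "x \<in> carrier_vec k" "v = A *\<^sub>v x" and y: "y \<in> carrier_vec k" "w = A *\<^sub>v y"
      using A by (metis mat_rangeE)
    have v: "v \<in> carrier_vec n" and w: "w \<in> carrier_vec n" using x y A by auto
    have diff: "v - w = A *\<^sub>v (x - y)" using x y A by (simp add: mult_minus_distrib_mat_vec)
    have "M *\<^sub>v (v - w) = 0\<^sub>v p"
      using eq v w M by (simp add: mult_minus_distrib_mat_vec)
    moreover have "v - w \<in> mat_range A"
      unfolding diff using x y A by (intro mat_rangeI) simp
    ultimately have "v - w = 0\<^sub>v n" using ker by blast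
    show "v = w"
    proof (rule eq_vecI)
      fix i assume "i < dim_vec w"
      then show "v $ i = w $ i"
        using arg_cong[OF \<open>v - w = 0\<^sub>v n\<close>, of "\<lambda>u. u $ i"] v w by simp
    qed (use v w in simp)
  qed
qed

lemma
  fixes A M :: "real mat"
  assumes A: "A \<in> carrier_mat n k" and M: "M \<in> carrier_mat p n"
  shows mat_rank_mult_le: "mat_rank (M * A) \<le> mat_rank A"
    and mat_rank_mult_eq_iff:
      "mat_rank (M * A) = mat_rank A \<longleftrightarrow> (\<forall>v\<in>mat_range A. M *\<^sub>v v = 0\<^sub>v p \<longrightarrow> v = 0\<^sub>v n)"
proof -
  interpret Vn: vec_space "TYPE(real)" n .
  interpret Vp: vec_space "TYPE(real)" p .
  interpret R: vectorspace class_ring "Vn.vs (mat_range A)"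
    by (rule Vn.subspace_is_vs[OF Vn.mat_range_subspace[OF A]])
  have fin_dim: "R.fin_dim" by (rule Vn.mat_range_fin_dim[OF A])
  interpret MA: linear_map class_ring "Vn.vs (mat_range A)" Vp.V "\<lambda>v. M *\<^sub>v v"
  proof unfold_locales
    show "(\<lambda>v. M *\<^sub>v v) \<in> LinearCombinations.module_hom class_ring (Vn.vs (mat_range A)) Vp.V"
      unfolding LinearCombinations.module_hom_def using mat_range_carrier[OF A] M
      by (auto simp: module_vec_simps intro!: mult_add_distrib_mat_vec[OF M] mult_mat_vec[OF M])
  qed
  have "MA.imT = mat_range (M * A)"
    unfolding mod_hom.im_def[OF MA.mod_hom_axioms] by (simp add: mat_range_mult[OF A M])
  then have rank_MA: "mat_rank (M * A) = vectorspace.dim class_ring (Vp.vs MA.imT)"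
    using Vp.rank_eq_dim_mat_range[OF mult_carrier_mat[OF M A]] M by (simp add: mat_rank_def)
  have rank_A: "mat_rank A = R.dim"
    using Vn.rank_eq_dim_mat_range[OF A] A by (simp add: mat_rank_def)
  show "mat_rank (M * A) \<le> mat_rank A"
    unfolding rank_MA rank_A by (rule MA.dim_image_le[OF fin_dim])
  show "mat_rank (M * A) = mat_rank A \<longleftrightarrow> (\<forall>v\<in>mat_range A. M *\<^sub>v v = 0\<^sub>v p \<longrightarrow> v = 0\<^sub>v n)"
    unfolding rank_MA rank_A MA.dim_image_eq_iff_inj[OF fin_dim] inj_on_mat_range_iff[OF A M, symmetric]
    by simp
qed

lemma mat_rank_mono:
  fixes X Y :: "real mat"
  assumes X: "X \<in> carrier_mat n k" and Y: "Y \<in> carrier_mat n l"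
    and range: "mat_range X \<subseteq> mat_range Y"
  shows "mat_rank X \<le> mat_rank Y"
proof -
  interpret Vn: vec_space "TYPE(real)" n .
  interpret RY: vectorspace class_ring "Vn.vs (mat_range Y)"
    by (rule Vn.subspace_is_vs[OF Vn.mat_range_subspace[OF Y]])
  have nested: "VectorSpace.subspace class_ring (mat_range X) (Vn.vs (mat_range Y))"
    by (rule Vn.nested_subspaces[OF Vn.mat_range_subspace[OF Y] Vn.mat_range_subspace[OF X] range])
  have "vectorspace.dim class_ring (RY.vs (mat_range X)) \<le> RY.dim"
    by (rule RY.subspace_dim[OF nested Vn.mat_range_fin_dim[OF Y]]) (use Vn.mat_range_fin_dim[OF X] in simp)
  then show ?thesis
    using Vn.rank_eq_dim_mat_range[OF X] Vn.rank_eq_dim_mat_range[OF Y] X Y by (simp add: mat_rank_def)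
qed

section \<open>Weighted Gram matrices\<close>

lemma mat_diag_one: "mat_diag n (\<lambda>_. 1) = (1\<^sub>m n :: 'a :: semiring_1 mat)"
  unfolding mat_diag_def by (rule eq_matI) auto

lemma mat_diag_mult_vec_index:
  assumes "j < r" and "s \<in> carrier_vec r"
  shows "(mat_diag r d *\<^sub>v s) $ j = d j * s $ j"
proof -
  have "(mat_diag r d *\<^sub>v s) $ j = (\<Sum>i\<in>{0..<r}. (if j = i then d i else 0) * s $ i)"
    using assms unfolding mat_diag_def by (simp add: scalar_prod_def row_def)
  also have "\<dots> = (\<Sum>i\<in>{0..<r}. if j = i then d i * s $ i else 0)"
    by (rule sum.cong) auto
  also have "\<dots> = d j * s $ j" using assms by (simp add: sum.delta)
  finally show ?thesis .
qed

lemma mat_diag_mult_vec_eq_0: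
  fixes d :: "nat \<Rightarrow> 'a :: field"
  assumes "\<forall>j<r. d j \<noteq> 0" and s: "s \<in> carrier_vec r" and "mat_diag r d *\<^sub>v s = 0\<^sub>v r"
  shows "s = 0\<^sub>v r"
proof (rule eq_vecI)
  fix j assume "j < dim_vec (0\<^sub>v r)"
  then have "j < r" by simp
  then have "d j * s $ j = 0"
    using arg_cong[OF assms(3), of "\<lambda>v. v $ j"] mat_diag_mult_vec_index[OF _ s] by simp
  then show "s $ j = 0\<^sub>v r $ j" using assms(1) \<open>j < r\<close> by simp
qed (use s in simp)

lemma weighted_gram_carrier:
  "A \<in> carrier_mat n r \<Longrightarrow> A * mat_diag r d * transpose_mat A \<in> carrier_mat n n"
  by (intro mult_carrier_mat[OF mult_carrier_mat[OF _ mat_diag_dim]]) simp_all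

lemma scalar_prod_weighted_gram:
  fixes A :: "real mat"
  assumes A: "A \<in> carrier_mat n r" and u: "u \<in> carrier_vec n" and v: "v \<in> carrier_vec n"
  shows "u \<bullet> ((A * mat_diag r d * transpose_mat A) *\<^sub>v v)
    = (\<Sum>j<r. d j * (transpose_mat A *\<^sub>v u) $ j * (transpose_mat A *\<^sub>v v) $ j)"
proof -
  define s where "s = mat_diag r d *\<^sub>v (transpose_mat A *\<^sub>v v)"
  have s: "s \<in> carrier_vec r" unfolding s_def by (rule mult_mat_vec_carrier[OF mat_diag_dim]) (use A v in auto)
  have AT: "transpose_mat A \<in> carrier_mat r n" using A by simp
  have ATv: "transpose_mat A *\<^sub>v v \<in> carrier_vec r" using AT v by simp
  have "(A * mat_diag r d * transpose_mat A) *\<^sub>v v = A *\<^sub>v s"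
    unfolding s_def using assoc_mult_mat_vec[OF mult_carrier_mat[OF A mat_diag_dim] AT v]
      assoc_mult_mat_vec[OF A mat_diag_dim ATv] by simp
  then have "u \<bullet> ((A * mat_diag r d * transpose_mat A) *\<^sub>v v) = (transpose_mat A *\<^sub>v u) \<bullet> s"
    using transpose_vec_mult_scalar[OF A s u] by simp
  also have "\<dots> = (\<Sum>j<r. (transpose_mat A *\<^sub>v u) $ j * s $ j)"
    using s A by (simp add: scalar_prod_def lessThan_atLeast0)
  also have "\<dots> = (\<Sum>j<r. d j * (transpose_mat A *\<^sub>v u) $ j * (transpose_mat A *\<^sub>v v) $ j)"
    unfolding s_def using A v by (intro sum.cong) (simp_all add: mat_diag_mult_vec_index)
  finally show ?thesis .
qed

lemma weighted_gram_form_eq_0: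
  fixes A :: "real mat"
  assumes A: "A \<in> carrier_mat n r" and d: "\<forall>j<r. d j > 0" and w: "w \<in> carrier_vec n"
    and "w \<bullet> ((A * mat_diag r d * transpose_mat A) *\<^sub>v w) = 0"
  shows "transpose_mat A *\<^sub>v w = 0\<^sub>v r"
proof -
  define t where "t = transpose_mat A *\<^sub>v w"
  have "(\<Sum>j<r. d j * t $ j * t $ j) = 0"
    using assms scalar_prod_weighted_gram[OF A w w] unfolding t_def by simp
  moreover have "0 \<le> d j * t $ j * t $ j" if "j < r" for j
    using d that by (simp add: mult.assoc less_imp_le)
  ultimately have "d j * t $ j * t $ j = 0" if "j < r" for j
    using sum_nonneg_eq_0_iff[of "{..<r}" "\<lambda>j. d j * t $ j * t $ j"] that by simp
  then have "t $ j = 0" if "j < r" for j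
    using d that by (metis less_irrefl mult_eq_0_iff)
  then show ?thesis unfolding t_def[symmetric] using A t_def by (intro eq_vecI) auto
qed

text \<open>Over the reals \<open>A\<^sup>T A w = 0\<close> forces \<open>A w = 0\<close>, so \<open>rank A = rank (A\<^sup>T A) \<le> rank A\<^sup>T\<close>.\<close>
lemma mat_rank_le_transpose:
  fixes A :: "real mat"
  assumes A: "A \<in> carrier_mat n k"
  shows "mat_rank A \<le> mat_rank (transpose_mat A)"
proof -
  have AT: "transpose_mat A \<in> carrier_mat k n" using A by simp
  have gram: "transpose_mat A * mat_diag n (\<lambda>_. 1) * transpose_mat (transpose_mat A) = transpose_mat A * A"
    using A by (simp add: mat_diag_one)
  have "mat_rank (transpose_mat A * A) = mat_rank A"
    unfolding mat_rank_mult_eq_iff[OF A AT]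
  proof (intro ballI impI)
    fix v assume v: "v \<in> mat_range A" and "transpose_mat A *\<^sub>v v = 0\<^sub>v k"
    obtain w where w: "w \<in> carrier_vec k" "v = A *\<^sub>v w" using v A by (rule mat_rangeE)
    have "(transpose_mat A * A) *\<^sub>v w = transpose_mat A *\<^sub>v v"
      unfolding w(2) by (rule assoc_mult_mat_vec[OF AT A w(1)])
    then have "w \<bullet> ((transpose_mat A * mat_diag n (\<lambda>_. 1) * transpose_mat (transpose_mat A)) *\<^sub>v w) = 0"
      unfolding gram using \<open>transpose_mat A *\<^sub>v v = 0\<^sub>v k\<close> w(1) by simp
    then show "v = 0\<^sub>v n"
      using weighted_gram_form_eq_0[OF AT, of "\<lambda>_. 1" w] w by simp
  qed
  moreover have "mat_rank (transpose_mat A * A) \<le> mat_rank (transpose_mat A)"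
    by (rule mat_rank_mono[OF mult_carrier_mat[OF AT A] AT mat_range_mult_subset[OF AT A]])
  ultimately show ?thesis by simp
qed

lemma mat_rank_diag_mult:
  fixes X :: "real mat"
  assumes X: "X \<in> carrier_mat r n" and d: "\<forall>j<r. d j \<noteq> 0"
  shows "mat_rank (mat_diag r d * X) = mat_rank X"
  unfolding mat_rank_mult_eq_iff[OF X mat_diag_dim]
proof (intro ballI impI)
  fix v assume v: "v \<in> mat_range X" and Dv: "mat_diag r d *\<^sub>v v = 0\<^sub>v r"
  have "v \<in> carrier_vec r" using v mat_range_carrier[OF X] by blast
  with d show "v = 0\<^sub>v r" using Dv by (rule mat_diag_mult_vec_eq_0)
qed

lemma mat_range_weighted_gram_subset:
  assumes A: "A \<in> carrier_mat n r"
  shows "mat_range (A * mat_diag r d * transpose_mat A) \<subseteq> mat_range A"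
proof -
  have "A * mat_diag r d * transpose_mat A = A * (mat_diag r d * transpose_mat A)"
    using assoc_mult_mat[OF A mat_diag_dim, of "transpose_mat A" n] A by simp
  then show ?thesis
    using mat_range_mult_subset[OF A mult_carrier_mat[OF mat_diag_dim, of "transpose_mat A" r n]] A by simp
qed

lemma mat_rank_weighted_gram:
  fixes A :: "real mat"
  assumes A: "A \<in> carrier_mat n r" and d: "\<forall>j<r. d j > 0"
  shows "mat_rank (A * mat_diag r d * transpose_mat A) = mat_rank A"
proof (rule antisym)
  have D: "mat_diag r d \<in> carrier_mat r r" by simp
  have AT: "transpose_mat A \<in> carrier_mat r n" using A by simp
  have DAT: "mat_diag r d * transpose_mat A \<in> carrier_mat r n" using mult_carrier_mat[OF D AT] .
  have assoc: "A * mat_diag r d * transpose_mat A = A * (mat_diag r d * transpose_mat A)"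
    using assoc_mult_mat[OF A D AT] .
  show "mat_rank (A * mat_diag r d * transpose_mat A) \<le> mat_rank A"
    by (rule mat_rank_mono[OF weighted_gram_carrier[OF A] A mat_range_weighted_gram_subset[OF A]])
  have "mat_rank (A * (mat_diag r d * transpose_mat A)) = mat_rank (mat_diag r d * transpose_mat A)"
    unfolding mat_rank_mult_eq_iff[OF DAT A]
  proof (intro ballI impI)
    fix v assume v: "v \<in> mat_range (mat_diag r d * transpose_mat A)" and Av: "A *\<^sub>v v = 0\<^sub>v n"
    obtain w where w: "w \<in> carrier_vec n" "v = (mat_diag r d * transpose_mat A) *\<^sub>v w"
      using v DAT by (rule mat_rangeE)
    have "(A * mat_diag r d * transpose_mat A) *\<^sub>v w = A *\<^sub>v v"
      unfolding assoc w(2) by (rule assoc_mult_mat_vec[OF A DAT w(1)])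
    then have "w \<bullet> ((A * mat_diag r d * transpose_mat A) *\<^sub>v w) = 0"
      using Av w(1) by simp
    then have "transpose_mat A *\<^sub>v w = 0\<^sub>v r" by (rule weighted_gram_form_eq_0[OF A d w(1)])
    moreover have "v = mat_diag r d *\<^sub>v (transpose_mat A *\<^sub>v w)"
      unfolding w(2) by (rule assoc_mult_mat_vec[OF D AT w(1)])
    ultimately show "v = 0\<^sub>v r" using mult_mat_zero_vec[OF D] by simp
  qed
  also have "\<dots> = mat_rank (transpose_mat A)"
    using d by (intro mat_rank_diag_mult[OF AT]) (metis less_irrefl)
  finally show "mat_rank A \<le> mat_rank (A * mat_diag r d * transpose_mat A)"
    unfolding assoc using mat_rank_le_transpose[OF A] by simp
qed

section \<open>Subvectors, block products and Schur complements\<close>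

lemma bij_betw_pick:
  assumes "finite I"
  shows "bij_betw (pick I) {..<card I} I"
proof -
  have "inj_on (pick I) {..<card I}"
    by (rule inj_onI) (metis lessThan_iff linorder_neqE_nat pick_mono_le less_irrefl)
  moreover have "pick I ` {..<card I} \<subseteq> I" using pick_in_set_le by auto
  ultimately have "pick I ` {..<card I} = I"
    using card_image card_subset_eq[OF assms] by (metis card_lessThan)
  with \<open>inj_on (pick I) _\<close> show ?thesis unfolding bij_betw_def by simp
qed

lemma pick_atLeastLessThan:
  assumes "i < m"
  shows "pick {0..<m} i = i"
proof -
  have "{a \<in> {0..<m}. a < i} = {0..<i}" using assms by auto
  then show ?thesis using pick_card_in_set[of i "{0..<m}"] assms by simp
qed

lemma submatrix_carrier:
  assumes "A \<in> carrier_mat n k" and "I \<subseteq> {0..<n}" and "J \<subseteq> {0..<k}"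
  shows "submatrix A I J \<in> carrier_mat (card I) (card J)"
proof -
  have "{i. i < dim_row A \<and> i \<in> I} = I" "{j. j < dim_col A \<and> j \<in> J} = J"
    using assms by auto
  then show ?thesis by (intro carrier_matI) (simp_all only: dim_submatrix)
qed

definition subvec :: "'a vec \<Rightarrow> nat set \<Rightarrow> 'a vec" where
  "subvec v I = vec (card I) (\<lambda>i. v $ pick I i)"

lemma subvec_carrier [simp]: "subvec v I \<in> carrier_vec (card I)"
  and dim_subvec [simp]: "dim_vec (subvec v I) = card I"
  unfolding subvec_def by simp_all

lemma subvec_zero: "I \<subseteq> {0..<n} \<Longrightarrow> subvec (0\<^sub>v n) I = 0\<^sub>v (card I)"
  unfolding subvec_def by (intro eq_vecI) (auto dest: pick_in_set_le)

lemma subvec_atLeastLessThan: "v \<in> carrier_vec n \<Longrightarrow> subvec v {0..<n} = v"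
  unfolding subvec_def by (intro eq_vecI) (auto simp: pick_atLeastLessThan)

lemma subvec_map_vec: "I \<subseteq> {0..<dim_vec v} \<Longrightarrow> subvec (map_vec f v) I = map_vec f (subvec v I)"
  unfolding subvec_def by (intro eq_vecI) (auto dest: pick_in_set_le)

definition merge_vec :: "nat \<Rightarrow> nat set \<Rightarrow> 'a vec \<Rightarrow> 'a vec \<Rightarrow> 'a vec" where
  "merge_vec c I w z =
     vec c (\<lambda>k. if k \<in> I then w $ card {a\<in>I. a < k} else z $ card {a\<in>{0..<c} - I. a < k})"

lemma merge_vec_carrier [simp]: "merge_vec c I w z \<in> carrier_vec c"
  unfolding merge_vec_def by simp

lemma subvec_merge_vec:
  assumes "I \<subseteq> {0..<c}" and w: "w \<in> carrier_vec (card I)" and z: "z \<in> carrier_vec (card ({0..<c} - I))"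
  shows "subvec (merge_vec c I w z) I = w" and "subvec (merge_vec c I w z) ({0..<c} - I) = z"
proof -
  show "subvec (merge_vec c I w z) I = w"
  proof (rule eq_vecI)
    fix i assume "i < dim_vec w"
    then have i: "i < card I" using w by simp
    then show "subvec (merge_vec c I w z) I $ i = w $ i"
      using assms pick_in_set_le[OF i] card_pick_le[OF i]
      unfolding subvec_def merge_vec_def by auto
  qed (use w in simp)
  show "subvec (merge_vec c I w z) ({0..<c} - I) = z"
  proof (rule eq_vecI)
    fix i assume "i < dim_vec z"
    then have i: "i < card ({0..<c} - I)" using z by simp
    then show "subvec (merge_vec c I w z) ({0..<c} - I) $ i = z $ i"
      using pick_in_set_le[OF i] card_pick_le[OF i]
      unfolding subvec_def merge_vec_def by auto
  qed (use z in simp)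
qed

lemma submatrix_mult_vec_split:
  assumes A: "A \<in> carrier_mat n c" and R: "R \<subseteq> {0..<n}"
    and IJ: "I \<union> J = {0..<c}" "I \<inter> J = {}" and v: "v \<in> carrier_vec c"
  shows "submatrix A R I *\<^sub>v subvec v I + submatrix A R J *\<^sub>v subvec v J = subvec (A *\<^sub>v v) R"
proof (rule eq_vecI)
  have I: "I \<subseteq> {0..<c}" and J: "J \<subseteq> {0..<c}" using IJ by auto
  then have fin: "finite I" "finite J" using finite_subset by blast+
  have carriers: "submatrix A R I \<in> carrier_mat (card R) (card I)" "submatrix A R J \<in> carrier_mat (card R) (card J)"
    using submatrix_carrier[OF A R] I J by auto
  show "dim_vec (submatrix A R I *\<^sub>v subvec v I + submatrix A R J *\<^sub>v subvec v J) = dim_vec (subvec (A *\<^sub>v v) R)"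
    using carriers by simp
  fix i assume "i < dim_vec (subvec (A *\<^sub>v v) R)"
  then have i: "i < card R" by simp
  define p where "p = pick R i"
  have p: "p < n" unfolding p_def using pick_in_set_le[OF i] R by auto
  have block: "(submatrix A R K *\<^sub>v subvec v K) $ i = (\<Sum>k\<in>K. A $$ (p, k) * v $ k)"
    if K: "K \<subseteq> {0..<c}" "finite K" for K
  proof -
    have "{j. j < dim_row A \<and> j \<in> R} = R" "{j. j < dim_col A \<and> j \<in> K} = K"
      using A R K by auto
    then have "(submatrix A R K *\<^sub>v subvec v K) $ i = (\<Sum>k<card K. A $$ (p, pick K k) * v $ pick K k)"
      using i submatrix_carrier[OF A R K(1)] submatrix_index[of i A R _ K]
      by (simp add: scalar_prod_def row_def subvec_def p_def lessThan_atLeast0)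
    also have "\<dots> = (\<Sum>k\<in>K. A $$ (p, k) * v $ k)"
      using sum.reindex_bij_betw[OF bij_betw_pick[OF K(2)], of "\<lambda>k. A $$ (p, k) * v $ k"] .
    finally show ?thesis .
  qed
  have "(\<Sum>k\<in>I. A $$ (p, k) * v $ k) + (\<Sum>k\<in>J. A $$ (p, k) * v $ k) = (\<Sum>k\<in>{0..<c}. A $$ (p, k) * v $ k)"
    unfolding IJ(1)[symmetric] by (rule sum.union_disjoint[OF fin IJ(2), symmetric])
  also have "\<dots> = (A *\<^sub>v v) $ p" using A v p by (simp add: scalar_prod_def row_def)
  finally show "(submatrix A R I *\<^sub>v subvec v I + submatrix A R J *\<^sub>v subvec v J) $ i = subvec (A *\<^sub>v v) R $ i"
    using block[OF I fin(1)] block[OF J fin(2)] i carriers by (simp add: subvec_def p_def)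
qed

lemma transpose_submatrix_mult_vec:
  fixes Z :: "real mat"
  assumes Z: "Z \<in> carrier_mat m c" and I: "I \<subseteq> {0..<c}" and \<mu>: "\<mu> \<in> carrier_vec m"
  shows "transpose_mat (submatrix Z {0..<m} I) *\<^sub>v \<mu> = subvec (transpose_mat Z *\<^sub>v \<mu>) I"
proof (rule eq_vecI)
  have carrier: "submatrix Z {0..<m} I \<in> carrier_mat m (card I)"
    using submatrix_carrier[OF Z _ I, of "{0..<m}"] by simp
  then show "dim_vec (transpose_mat (submatrix Z {0..<m} I) *\<^sub>v \<mu>) = dim_vec (subvec (transpose_mat Z *\<^sub>v \<mu>) I)"
    by simp
  fix i assume "i < dim_vec (subvec (transpose_mat Z *\<^sub>v \<mu>) I)"
  then have i: "i < card I" by simp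
  have "pick I i < c" using pick_in_set_le[OF i] I by auto
  moreover have "{j. j < dim_row Z \<and> j \<in> {0..<m}} = {0..<m}" "{j. j < dim_col Z \<and> j \<in> I} = I"
    using Z I by auto
  ultimately show "(transpose_mat (submatrix Z {0..<m} I) *\<^sub>v \<mu>) $ i = subvec (transpose_mat Z *\<^sub>v \<mu>) I $ i"
    using i Z \<mu> carrier
    by (simp add: subvec_def scalar_prod_def submatrix_index pick_atLeastLessThan)
qed

lemma mult_left_inverse_mat_vec:
  fixes A Ainv :: "'a :: semiring_1 mat"
  assumes "A \<in> carrier_mat n n" and "Ainv \<in> carrier_mat n n" and "Ainv * A = 1\<^sub>m n"
    and "x \<in> carrier_vec n"
  shows "Ainv *\<^sub>v (A *\<^sub>v x) = x"
  using assoc_mult_mat_vec[OF assms(2,1,4), symmetric] assms(3,4) by simp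

lemma schur_complement_mult_vec:
  fixes A B C Dinv :: "'a :: comm_ring_1 mat"
  assumes A: "A \<in> carrier_mat n n" and B: "B \<in> carrier_mat n k" and Dinv: "Dinv \<in> carrier_mat k k"
    and C: "C \<in> carrier_mat k n" and x: "x \<in> carrier_vec n"
  shows "(A - B * Dinv * C) *\<^sub>v x = A *\<^sub>v x - B *\<^sub>v (Dinv *\<^sub>v (C *\<^sub>v x))"
proof -
  have BD: "B * Dinv \<in> carrier_mat n k" using B Dinv by simp
  have "(B * Dinv * C) *\<^sub>v x = B *\<^sub>v (Dinv *\<^sub>v (C *\<^sub>v x))"
    using assoc_mult_mat_vec[OF BD C x] assoc_mult_mat_vec[OF B Dinv] C x by simp
  moreover have "B * Dinv * C \<in> carrier_mat n n" using BD C by simp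
  ultimately show ?thesis using minus_mult_distrib_mat_vec[OF A _ x] by simp
qed

lemma schur_complement_mult_subvec:
  fixes L Linv :: "real mat" and c :: nat and Vr :: "nat set"
  defines "V1 \<equiv> {0..<c} - Vr"
  assumes L: "L \<in> carrier_mat c c" and Vr: "Vr \<subseteq> {0..<c}"
    and Linv: "Linv \<in> carrier_mat (card Vr) (card Vr)" "Linv * submatrix L Vr Vr = 1\<^sub>m (card Vr)"
    and y: "y \<in> carrier_vec c" and Ly: "subvec (L *\<^sub>v y) Vr = 0\<^sub>v (card Vr)"
  shows "(submatrix L V1 V1 - submatrix L V1 Vr * Linv * submatrix L Vr V1) *\<^sub>v subvec y V1
    = subvec (L *\<^sub>v y) V1"
proof -
  define y1 y2 where "y1 = subvec y V1" and "y2 = subvec y Vr"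
  have V1: "V1 \<subseteq> {0..<c}" and split: "V1 \<union> Vr = {0..<c}" "V1 \<inter> Vr = {}"
    using Vr unfolding V1_def by auto
  have L11: "submatrix L V1 V1 \<in> carrier_mat (card V1) (card V1)"
    and L12: "submatrix L V1 Vr \<in> carrier_mat (card V1) (card Vr)"
    and L21: "submatrix L Vr V1 \<in> carrier_mat (card Vr) (card V1)"
    and L22: "submatrix L Vr Vr \<in> carrier_mat (card Vr) (card Vr)"
    using submatrix_carrier[OF L] V1 Vr by auto
  have y1: "y1 \<in> carrier_vec (card V1)" and y2: "y2 \<in> carrier_vec (card Vr)"
    unfolding y1_def y2_def by simp_all
  define g where "g = Linv *\<^sub>v (submatrix L Vr V1 *\<^sub>v y1)"
  have g: "g \<in> carrier_vec (card Vr)" unfolding g_def using Linv(1) L21 y1 by simp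
  have row1: "submatrix L V1 V1 *\<^sub>v y1 + submatrix L V1 Vr *\<^sub>v y2 = subvec (L *\<^sub>v y) V1"
    unfolding y1_def y2_def by (rule submatrix_mult_vec_split[OF L V1 split y])
  have "submatrix L Vr V1 *\<^sub>v y1 + submatrix L Vr Vr *\<^sub>v y2 = 0\<^sub>v (card Vr)"
    using submatrix_mult_vec_split[OF L Vr split y] Ly unfolding y1_def y2_def by simp
  moreover have "Linv *\<^sub>v (submatrix L Vr V1 *\<^sub>v y1 + submatrix L Vr Vr *\<^sub>v y2) = g + y2"
    unfolding g_def using mult_add_distrib_mat_vec[OF Linv(1)] mult_left_inverse_mat_vec[OF L22 Linv y2]
      L21 L22 y1 y2 by simp
  \<comment> \<open>the vanishing \<open>Vr\<close>-rows of \<open>L y\<close> determine \<open>y\<close> on \<open>Vr\<close>\<close>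
  ultimately have "g + y2 = 0\<^sub>v (card Vr)" using mult_mat_zero_vec[OF Linv(1)] by simp
  then have cancel: "submatrix L V1 Vr *\<^sub>v g + submatrix L V1 Vr *\<^sub>v y2 = 0\<^sub>v (card V1)"
    using mult_add_distrib_mat_vec[OF L12 g y2] mult_mat_zero_vec[OF L12] by simp
  have schur: "(submatrix L V1 V1 - submatrix L V1 Vr * Linv * submatrix L Vr V1) *\<^sub>v y1
      = submatrix L V1 V1 *\<^sub>v y1 - submatrix L V1 Vr *\<^sub>v g"
    unfolding g_def by (rule schur_complement_mult_vec[OF L11 L12 Linv(1) L21 y1])
  show ?thesis
  proof (rule eq_vecI)
    fix i assume "i < dim_vec (subvec (L *\<^sub>v y) V1)"
    then have i: "i < card V1" by simp
    show "((submatrix L V1 V1 - submatrix L V1 Vr * Linv * submatrix L Vr V1) *\<^sub>v subvec y V1) $ i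
      = subvec (L *\<^sub>v y) V1 $ i"
      unfolding y1_def[symmetric] schur row1[symmetric]
      using arg_cong[OF cancel, of "\<lambda>v. v $ i"] i L11 L12 by simp
  qed (use L11 L12 in simp)
qed

lemma schur_complement_lift:
  fixes L Linv :: "real mat" and c :: nat and Vr :: "nat set"
  defines "V1 \<equiv> {0..<c} - Vr"
  assumes L: "L \<in> carrier_mat c c" and Vr: "Vr \<subseteq> {0..<c}"
    and Linv: "Linv \<in> carrier_mat (card Vr) (card Vr)" "submatrix L Vr Vr * Linv = 1\<^sub>m (card Vr)"
    and w: "w \<in> carrier_vec (card V1)"
  obtains y where "y \<in> carrier_vec c" "subvec y V1 = w" "subvec (L *\<^sub>v y) Vr = 0\<^sub>v (card Vr)"
proof -
  have V1: "V1 \<subseteq> {0..<c}" and split: "V1 \<union> Vr = {0..<c}" "V1 \<inter> Vr = {}"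
    and Vr_eq: "{0..<c} - V1 = Vr"
    using Vr unfolding V1_def by auto
  have L21: "submatrix L Vr V1 \<in> carrier_mat (card Vr) (card V1)"
    and L22: "submatrix L Vr Vr \<in> carrier_mat (card Vr) (card Vr)"
    using submatrix_carrier[OF L] V1 Vr by auto
  define z where "z = Linv *\<^sub>v (- (submatrix L Vr V1 *\<^sub>v w))"
  have z: "z \<in> carrier_vec (card Vr)" unfolding z_def using Linv(1) L21 w by simp
  define y where "y = merge_vec c V1 w z"
  have y: "y \<in> carrier_vec c" unfolding y_def by simp
  have y1: "subvec y V1 = w" and y2: "subvec y Vr = z"
    using subvec_merge_vec[OF V1 w, of z] z unfolding y_def Vr_eq by simp_all
  have "submatrix L Vr Vr *\<^sub>v z = - (submatrix L Vr V1 *\<^sub>v w)"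
    unfolding z_def using mult_left_inverse_mat_vec[OF Linv(1) L22 Linv(2)] L21 w by simp
  then have "subvec (L *\<^sub>v y) Vr = submatrix L Vr V1 *\<^sub>v w + - (submatrix L Vr V1 *\<^sub>v w)"
    using submatrix_mult_vec_split[OF L Vr split y] y1 y2 by simp
  also have "\<dots> = 0\<^sub>v (card Vr)" using L21 w by (intro eq_vecI) auto
  finally show ?thesis using that y y1 by blast
qed

section \<open>Balanced mass action networks\<close>

lemma incidence_mat_carrier [simp]: "incidence_mat c r S P \<in> carrier_mat c r"
  unfolding incidence_mat_def by simp

lemma transpose_incidence_mat_mult_vec_index:
  assumes j: "j < r" and SP: "S j < c" "P j < c" and u: "u \<in> carrier_vec c"
  shows "(transpose_mat (incidence_mat c r S P) *\<^sub>v u) $ j = u $ P j - u $ S j"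
proof -
  have "(transpose_mat (incidence_mat c r S P) *\<^sub>v u) $ j
      = (\<Sum>i\<in>{0..<c}. (if P j = i then u $ i else 0) - (if S j = i then u $ i else 0))"
    using j u unfolding incidence_mat_def by (auto simp: scalar_prod_def left_diff_distrib intro!: sum.cong)
  also have "\<dots> = u $ P j - u $ S j" using SP by (simp add: sum_subtractf sum.delta)
  finally show ?thesis .
qed

lemma diff_mult_exp_diff_nonneg: "0 \<le> (a - b) * (exp a - exp b :: real)"
  by (cases a b rule: linorder_cases) (simp_all add: mult_nonpos_nonpos)

lemma diff_mult_exp_diff_eq_0_iff: "(a - b) * (exp a - exp b :: real) = 0 \<longleftrightarrow> a = b"
  by simp

lemma Exp_vec_carrier: "u \<in> carrier_vec n \<Longrightarrow> Exp_vec u \<in> carrier_vec n"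
  and Exp_vec_index: "i < dim_vec u \<Longrightarrow> Exp_vec u $ i = exp (u $ i)"
  unfolding Exp_vec_def by simp_all

lemma incidence_laplacian_Exp_vec_eq_0:
  fixes c r :: nat and S P :: "nat \<Rightarrow> nat" and \<kappa> :: "nat \<Rightarrow> real"
  defines "B \<equiv> incidence_mat c r S P"
  assumes edges: "\<forall>j<r. S j < c \<and> P j < c" and \<kappa>: "\<forall>j<r. \<kappa> j > 0" and u: "u \<in> carrier_vec c"
    and form: "u \<bullet> ((B * mat_diag r \<kappa> * transpose_mat B) *\<^sub>v Exp_vec u) = 0"
  shows "(B * mat_diag r \<kappa> * transpose_mat B) *\<^sub>v Exp_vec u = 0\<^sub>v c"
proof -
  have B: "B \<in> carrier_mat c r" and BT: "transpose_mat B \<in> carrier_mat r c" unfolding B_def by simp_all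
  have Exp: "Exp_vec u \<in> carrier_vec c" using u by (rule Exp_vec_carrier)
  define t where "t j = \<kappa> j * ((u $ P j - u $ S j) * (exp (u $ P j) - exp (u $ S j)))" for j
  have increments: "(transpose_mat B *\<^sub>v u) $ j = u $ P j - u $ S j"
    "(transpose_mat B *\<^sub>v Exp_vec u) $ j = exp (u $ P j) - exp (u $ S j)" if "j < r" for j
    unfolding B_def using transpose_incidence_mat_mult_vec_index[OF that _ _ u]
      transpose_incidence_mat_mult_vec_index[OF that _ _ Exp] edges that u
    by (simp_all add: Exp_vec_index)
  have "(\<Sum>j<r. t j) = 0"
    using form scalar_prod_weighted_gram[OF B u Exp, of \<kappa>] increments unfolding t_def
    by (simp add: mult.assoc)
  moreover have "0 \<le> t j" if "j < r" for j
    unfolding t_def using \<kappa> that diff_mult_exp_diff_nonneg by (simp add: less_imp_le)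
  ultimately have "t j = 0" if "j < r" for j
    using sum_nonneg_eq_0_iff[of "{..<r}" t] that by simp
  then have "u $ P j = u $ S j" if "j < r" for j
    using \<kappa> that unfolding t_def by (metis less_irrefl mult_eq_0_iff diff_mult_exp_diff_eq_0_iff)
  then have "transpose_mat B *\<^sub>v Exp_vec u = 0\<^sub>v r"
    using increments(2) BT by (intro eq_vecI) simp_all
  then show ?thesis
    using assoc_mult_mat_vec[OF mult_carrier_mat[OF B mat_diag_dim] BT Exp]
      mult_mat_zero_vec[OF mult_carrier_mat[OF B mat_diag_dim[of r \<kappa>]]] by simp
qed

lemma Ln_vec_quot_carrier: "dim_vec x = m \<Longrightarrow> Ln_vec (vec_quot x xs) \<in> carrier_vec m"
  unfolding Ln_vec_def vec_quot_def by simp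

lemma balanced_rhs_eq_0_iff:
  fixes Z B :: "real mat"
  assumes Z: "Z \<in> carrier_mat m c" and B: "B \<in> carrier_mat c r" and x: "dim_vec x = m"
  shows "balanced_rhs Z B \<kappa> xs x = 0\<^sub>v m \<longleftrightarrow>
    Z *\<^sub>v ((B * mat_diag r \<kappa> * transpose_mat B) *\<^sub>v Exp_vec (transpose_mat Z *\<^sub>v Ln_vec (vec_quot x xs))) = 0\<^sub>v m"
proof -
  define L where "L = B * mat_diag r \<kappa> * transpose_mat B"
  define y where "y = Exp_vec (transpose_mat Z *\<^sub>v Ln_vec (vec_quot x xs))"
  have L: "L \<in> carrier_mat c c" unfolding L_def using B by (rule weighted_gram_carrier)
  have y: "y \<in> carrier_vec c"
    unfolding y_def using Z Ln_vec_quot_carrier[OF x] by (intro Exp_vec_carrier) simp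
  have "Z * B * mat_diag (dim_col B) \<kappa> * transpose_mat B = Z * L"
    unfolding L_def using B Z by (simp add: assoc_mult_mat[of _ m c _ r _ c] assoc_mult_mat[of Z m c B r _ r])
  then have "balanced_rhs Z B \<kappa> xs x = - ((Z * L) *\<^sub>v y)"
    unfolding balanced_rhs_def y_def[symmetric] using Z L y by simp
  also have "(Z * L) *\<^sub>v y = Z *\<^sub>v (L *\<^sub>v y)" using Z L y by simp
  finally have "balanced_rhs Z B \<kappa> xs x = - (Z *\<^sub>v (L *\<^sub>v y))" .
  moreover have "Z *\<^sub>v (L *\<^sub>v y) \<in> carrier_vec m" using Z L y by simp
  ultimately show ?thesis unfolding L_def[symmetric] y_def[symmetric]
    by (metis uminus_uminus_vec uminus_zero_vec)
qed

lemma complex_balanced_if_equilibrium: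
  fixes Z :: "real mat" and \<kappa> :: "nat \<Rightarrow> real"
  assumes Z: "Z \<in> carrier_mat m c" and edges: "\<forall>j<r. S j < c \<and> P j < c" and \<kappa>: "\<forall>j<r. \<kappa> j > 0"
    and \<mu>: "\<mu> \<in> carrier_vec m"
    and eq: "Z *\<^sub>v ((incidence_mat c r S P * mat_diag r \<kappa> * transpose_mat (incidence_mat c r S P))
      *\<^sub>v Exp_vec (transpose_mat Z *\<^sub>v \<mu>)) = 0\<^sub>v m"
  shows "(incidence_mat c r S P * mat_diag r \<kappa> * transpose_mat (incidence_mat c r S P))
    *\<^sub>v Exp_vec (transpose_mat Z *\<^sub>v \<mu>) = 0\<^sub>v c"
proof -
  define L where "L = incidence_mat c r S P * mat_diag r \<kappa> * transpose_mat (incidence_mat c r S P)"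
  define u where "u = transpose_mat Z *\<^sub>v \<mu>"
  have u: "u \<in> carrier_vec c" unfolding u_def using Z \<mu> by simp
  have Ly: "L *\<^sub>v Exp_vec u \<in> carrier_vec c"
    unfolding L_def by (rule mult_mat_vec_carrier[OF weighted_gram_carrier[OF incidence_mat_carrier] Exp_vec_carrier[OF u]])
  have "u \<bullet> (L *\<^sub>v Exp_vec u) = 0"
    unfolding u_def using transpose_vec_mult_scalar[OF Z Ly \<mu>] eq \<mu> unfolding L_def u_def by simp
  then show ?thesis
    using incidence_laplacian_Exp_vec_eq_0[OF edges \<kappa> u] unfolding L_def u_def by simp
qed

lemma deficiency_eq_0_iff:
  fixes Z B :: "real mat"
  assumes Z: "Z \<in> carrier_mat m c" and B: "B \<in> carrier_mat c r"
  shows "deficiency Z B = 0 \<longleftrightarrow> (\<forall>v\<in>mat_range B. Z *\<^sub>v v = 0\<^sub>v m \<longrightarrow> v = 0\<^sub>v c)"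
  unfolding deficiency_def mat_rank_mult_eq_iff[OF B Z, symmetric] by linarith

lemma deficiency_eq_0_if_inj_on_weighted_gram_range:
  fixes Z B :: "real mat"
  assumes Z: "Z \<in> carrier_mat m c" and B: "B \<in> carrier_mat c r" and d: "\<forall>j<r. d j > 0"
    and inj: "\<forall>v\<in>mat_range (B * mat_diag r d * transpose_mat B). Z *\<^sub>v v = 0\<^sub>v m \<longrightarrow> v = 0\<^sub>v c"
  shows "deficiency Z B = 0"
proof -
  define G where "G = mat_diag r d * transpose_mat B"
  have G: "G \<in> carrier_mat r c" unfolding G_def using B by (intro mult_carrier_mat[OF mat_diag_dim]) simp
  have BG: "B * G = B * mat_diag r d * transpose_mat B"
    unfolding G_def using assoc_mult_mat[OF B mat_diag_dim, of "transpose_mat B"] B by simp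
  have ZB: "Z * B \<in> carrier_mat m r" using Z B by simp
  have "mat_rank (Z * (B * G)) = mat_rank B"
    using mat_rank_mult_eq_iff[OF weighted_gram_carrier[OF B] Z, of d] inj unfolding BG
    by (simp add: mat_rank_weighted_gram[OF B d])
  moreover have "mat_rank (Z * (B * G)) \<le> mat_rank (Z * B)"
    using assoc_mult_mat[OF Z B G] mat_rank_mono[OF mult_carrier_mat[OF ZB G] ZB mat_range_mult_subset[OF ZB G]]
    by simp
  moreover have "mat_rank (Z * B) \<le> mat_rank B" by (rule mat_rank_mult_le[OF B Z])
  ultimately show ?thesis unfolding deficiency_def by simp
qed

section \<open>Reduction by a Schur complement\<close>

lemma mult_mat_vec_eq_submatrix_if_subvec_zero:
  assumes Z: "Z \<in> carrier_mat m c" and IJ: "I \<union> J = {0..<c}" "I \<inter> J = {}"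
    and u: "u \<in> carrier_vec c" and "subvec u J = 0\<^sub>v (card J)"
  shows "Z *\<^sub>v u = submatrix Z {0..<m} I *\<^sub>v subvec u I"
proof -
  have I: "I \<subseteq> {0..<c}" and J: "J \<subseteq> {0..<c}" using IJ by auto
  have "submatrix Z {0..<m} J *\<^sub>v subvec u J = 0\<^sub>v m"
    using assms(5) mult_mat_zero_vec[OF submatrix_carrier[OF Z _ J, of "{0..<m}"]] by simp
  moreover have "submatrix Z {0..<m} I *\<^sub>v subvec u I \<in> carrier_vec m"
    using submatrix_carrier[OF Z _ I, of "{0..<m}"] by simp
  ultimately show ?thesis
    using submatrix_mult_vec_split[OF Z _ IJ u, of "{0..<m}"] subvec_atLeastLessThan[OF mult_mat_vec_carrier[OF Z u]]
    by simp
qed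

context
  fixes m c r rh :: nat and Z B L Linv Bh :: "real mat" and S P :: "nat \<Rightarrow> nat"
    and \<kappa> \<kappa>h :: "nat \<Rightarrow> real" and Vr V1 :: "nat set"
  assumes Z: "Z \<in> carrier_mat m c"
    and B_def: "B = incidence_mat c r S P"
    and edges: "\<forall>j<r. S j < c \<and> P j < c"
    and \<kappa>: "\<forall>j<r. \<kappa> j > 0"
    and L_def: "L = B * mat_diag r \<kappa> * transpose_mat B"
    and Vr: "Vr \<subseteq> {0..<c}"
    and V1_def: "V1 = {0..<c} - Vr"
    and Linv: "Linv \<in> carrier_mat (card Vr) (card Vr)"
      "submatrix L Vr Vr * Linv = 1\<^sub>m (card Vr)" "Linv * submatrix L Vr Vr = 1\<^sub>m (card Vr)"
    and Bh: "Bh \<in> carrier_mat (card V1) rh"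
    and \<kappa>h: "\<forall>j<rh. \<kappa>h j > 0"
    and schur: "submatrix L V1 V1 - submatrix L V1 Vr * Linv * submatrix L Vr V1
      = Bh * mat_diag rh \<kappa>h * transpose_mat Bh"
begin

private lemma L_carrier: "L \<in> carrier_mat c c"
  unfolding L_def B_def by (rule weighted_gram_carrier[OF incidence_mat_carrier])

private lemma V1_subset: "V1 \<subseteq> {0..<c}"
  unfolding V1_def by auto

private lemma Zh_carrier: "submatrix Z {0..<m} V1 \<in> carrier_mat m (card V1)"
  using submatrix_carrier[OF Z _ V1_subset, of "{0..<m}"] by simp

private lemma reduced_laplacian_mult_subvec:
  assumes "y \<in> carrier_vec c" and "subvec (L *\<^sub>v y) Vr = 0\<^sub>v (card Vr)"
  shows "(Bh * mat_diag rh \<kappa>h * transpose_mat Bh) *\<^sub>v subvec y V1 = subvec (L *\<^sub>v y) V1"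
  using schur_complement_mult_subvec[OF L_carrier Vr Linv(1,3) assms] schur unfolding V1_def by simp

lemma equilibria_subset_reduced:
  "equilibria m Z B \<kappa> xs \<subseteq> equilibria m (submatrix Z {0..<m} V1) Bh \<kappa>h xs"
proof
  fix x assume "x \<in> equilibria m Z B \<kappa> xs"
  then have x: "pos_vec m x" and rhs: "balanced_rhs Z B \<kappa> xs x = 0\<^sub>v m"
    unfolding equilibria_def by auto
  have dim_x: "dim_vec x = m" using x unfolding pos_vec_def by simp
  define \<mu> where "\<mu> = Ln_vec (vec_quot x xs)"
  define y where "y = Exp_vec (transpose_mat Z *\<^sub>v \<mu>)"
  have \<mu>: "\<mu> \<in> carrier_vec m" unfolding \<mu>_def using dim_x by (rule Ln_vec_quot_carrier)
  have y: "y \<in> carrier_vec c" unfolding y_def using Z \<mu> by (intro Exp_vec_carrier) simp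
  have "Z *\<^sub>v (L *\<^sub>v y) = 0\<^sub>v m"
    using rhs balanced_rhs_eq_0_iff[OF Z incidence_mat_carrier dim_x] unfolding L_def B_def y_def \<mu>_def by simp
  then have "L *\<^sub>v y = 0\<^sub>v c"
    using complex_balanced_if_equilibrium[OF Z edges \<kappa> \<mu>] unfolding L_def B_def y_def by simp
  then have "subvec (L *\<^sub>v y) Vr = 0\<^sub>v (card Vr)" and "subvec (L *\<^sub>v y) V1 = 0\<^sub>v (card V1)"
    using subvec_zero[OF Vr] subvec_zero[OF V1_subset] by simp_all
  then have "(Bh * mat_diag rh \<kappa>h * transpose_mat Bh) *\<^sub>v subvec y V1 = 0\<^sub>v (card V1)"
    using reduced_laplacian_mult_subvec[OF y] by simp
  moreover have "subvec y V1 = Exp_vec (transpose_mat (submatrix Z {0..<m} V1) *\<^sub>v \<mu>)"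
    unfolding y_def Exp_vec_def transpose_submatrix_mult_vec[OF Z V1_subset \<mu>]
    by (rule subvec_map_vec) (use V1_subset Z in simp)
  ultimately have "submatrix Z {0..<m} V1 *\<^sub>v ((Bh * mat_diag rh \<kappa>h * transpose_mat Bh)
      *\<^sub>v Exp_vec (transpose_mat (submatrix Z {0..<m} V1) *\<^sub>v \<mu>)) = 0\<^sub>v m"
    using mult_mat_zero_vec[OF Zh_carrier] by simp
  then have "balanced_rhs (submatrix Z {0..<m} V1) Bh \<kappa>h xs x = 0\<^sub>v m"
    using balanced_rhs_eq_0_iff[OF Zh_carrier Bh dim_x] unfolding \<mu>_def by simp
  then show "x \<in> equilibria m (submatrix Z {0..<m} V1) Bh \<kappa>h xs"
    unfolding equilibria_def using x by simp
qed

lemma deficiency_zero_reduced: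
  assumes "deficiency Z B = 0"
  shows "deficiency (submatrix Z {0..<m} V1) Bh = 0"
proof (rule deficiency_eq_0_if_inj_on_weighted_gram_range[OF Zh_carrier Bh \<kappa>h], intro ballI impI)
  fix v assume "v \<in> mat_range (Bh * mat_diag rh \<kappa>h * transpose_mat Bh)"
    and Zv: "submatrix Z {0..<m} V1 *\<^sub>v v = 0\<^sub>v m"
  then obtain w where w: "w \<in> carrier_vec (card V1)" and v: "v = (Bh * mat_diag rh \<kappa>h * transpose_mat Bh) *\<^sub>v w"
    using weighted_gram_carrier[OF Bh] by (elim mat_rangeE)
  obtain y where y: "y \<in> carrier_vec c" and yw: "subvec y V1 = w"
    and Ly: "subvec (L *\<^sub>v y) Vr = 0\<^sub>v (card Vr)"
    using schur_complement_lift[OF L_carrier Vr Linv(1,2)] w unfolding V1_def by blast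
  have v_eq: "v = subvec (L *\<^sub>v y) V1"
    using reduced_laplacian_mult_subvec[OF y Ly] v yw by simp
  have split: "V1 \<union> Vr = {0..<c}" "V1 \<inter> Vr = {}" using Vr unfolding V1_def by auto
  have "Z *\<^sub>v (L *\<^sub>v y) = submatrix Z {0..<m} V1 *\<^sub>v v"
    unfolding v_eq using L_carrier y Ly by (intro mult_mat_vec_eq_submatrix_if_subvec_zero[OF Z split]) simp_all
  then have "Z *\<^sub>v (L *\<^sub>v y) = 0\<^sub>v m" using Zv by simp
  moreover have "L *\<^sub>v y \<in> mat_range B"
  proof -
    have "L *\<^sub>v y \<in> mat_range L" using mat_rangeI[of y L] L_carrier y by simp
    then show ?thesis
      using mat_range_weighted_gram_subset[OF incidence_mat_carrier, of c r S P \<kappa>]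
      unfolding L_def B_def by blast
  qed
  ultimately have "L *\<^sub>v y = 0\<^sub>v c"
    using assms deficiency_eq_0_iff[OF Z, of B r] unfolding B_def by simp
  then show "v = 0\<^sub>v (card V1)" using v_eq subvec_zero[OF V1_subset] by simp
qed

end

theorem proposition8:
  fixes m c r :: nat
    and Z :: "real mat"
    and S P :: "nat \<Rightarrow> nat"
    and kf kr :: "nat \<Rightarrow> real"
    and xs :: "real vec"
    and Vr :: "nat set"
    and L22inv :: "real mat"
    and rh :: nat and Sh Ph :: "nat \<Rightarrow> nat" and \<kappa>h :: "nat \<Rightarrow> real"
  defines "B \<equiv> incidence_mat c r S P"
  defines "\<kappa> \<equiv> \<lambda>j. kf j * exp (col Z (S j) \<bullet> Ln_vec xs)"
  defines "L \<equiv> B * mat_diag r \<kappa> * transpose_mat B"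
  defines "V1 \<equiv> {0..<c} - Vr"
  defines "L11 \<equiv> submatrix L V1 V1" and "L12 \<equiv> submatrix L V1 Vr"
      and "L21 \<equiv> submatrix L Vr V1" and "L22 \<equiv> submatrix L Vr Vr"
  defines "Zh \<equiv> submatrix Z {0..<m} V1"
  defines "Bh \<equiv> incidence_mat (card V1) rh Sh Ph"
  assumes Z: "Z \<in> carrier_mat m c" "\<forall>i<m. \<forall>j<c. Z $$ (i,j) \<in> \<nat>"
    and SP: "\<forall>j<r. S j < c \<and> P j < c"
    and k_pos: "\<forall>j<r. kf j > 0 \<and> kr j > 0"
    and xs_pos: "pos_vec m xs"
    and thermo_eq: "\<forall>j<r. mass_action_rate Z S P kf kr xs j = 0"
    and Vr: "Vr \<subseteq> {0..<c}"
    and L22inv: "L22inv \<in> carrier_mat (card Vr) (card Vr)"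
      "L22 * L22inv = 1\<^sub>m (card Vr)" "L22inv * L22 = 1\<^sub>m (card Vr)"
    and red_graph: "\<forall>j<rh. Sh j < card V1 \<and> Ph j < card V1"
    and red_weights: "\<forall>j<rh. \<kappa>h j > 0"
    and schur: "L11 - L12 * L22inv * L21 = Bh * mat_diag rh \<kappa>h * transpose_mat Bh"
  shows "equilibria m Z B \<kappa> xs \<subseteq> equilibria m Zh Bh \<kappa>h xs
     \<and> (deficiency Z B = 0 \<longrightarrow> deficiency Zh Bh = 0)"
proof -
  have \<kappa>_pos: "\<forall>j<r. \<kappa> j > 0" using k_pos unfolding \<kappa>_def by simp
  have Bh_carrier: "Bh \<in> carrier_mat (card V1) rh" unfolding Bh_def by simp
  have defs: "B = incidence_mat c r S P" "L = B * mat_diag r \<kappa> * transpose_mat B" "V1 = {0..<c} - Vr"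
    unfolding B_def L_def V1_def by simp_all
  note reduction = Z(1) defs(1) SP \<kappa>_pos defs(2) Vr defs(3) L22inv[unfolded L22_def]
    Bh_carrier red_weights schur[unfolded L11_def L12_def L21_def]
  show ?thesis
    unfolding Zh_def using equilibria_subset_reduced[OF reduction] deficiency_zero_reduced[OF reduction] by blast
qed

end
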